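(* Consider algorithm DIST-OPT as described in the context (with arbitrary step size $\gamma>0$ and arbitrary problem data), and use the convention $\lambda_j(s)=0$ for $s\le 0$. (a) If all delays are zero ($\tau^{\uparrow}_j(t)=\tau^{\downarrow}_j(t)=0$ for all $j,t$), then for all $i\in\mathcal N$ and $t\in\mathbb N$, $$z_i^P(t)=\sum_{j=1}^N R_{ij}\lambda_j(t-d_{ij}),\qquad z_i^Q(t)=\sum_{j=1}^N X_{ij}\lambda_j(t-d_{ij}),$$ where $d_{ij}=0$ if $\texttt{dist}(i,j)\le1$ and $d_{ij}=\texttt{dist}(i,j)-1$ otherwise. (b) If all delays are bounded by $\tau_{\max}$, then for all $i\in\mathcal N$ and $t\in\mathbb N$ there exist integers $0\le\bar\tau_{ij}(t)\le(\tau_{\max}+1)d$ such that $$z_i^P(t)=\sum_{j=1}^N R_{ij}\lambda_j(t-\bar\tau_{ij}(t)),\qquad z_i^Q(t)=\sum_{j=1}^N X_{ij}\lambda_j(t-\bar\tau_{ij}(t)).$$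
   Context: Network: a radial network is a tree on nodes $\{0,1,\dots,N\}$ rooted at node $0$; $\mathcal N=\{1,\dots,N\}$. Each $i\in\mathcal N$ has a unique parent $\sigma_i\in\{0,\dots,N\}$. Each edge $(h,k)$ ($h$ the parent of $k$) has resistance $r_{hk}\ge0$ and reactance $x_{hk}\ge0$. $\mathcal P_i$ is the set of edges on the path from $0$ to $i$. Define $N\times N$ matrices $R_{ij}=2\sum_{(h,k)\in\mathcal P_i\cap\mathcal P_j}r_{hk}$ and $X_{ij}=2\sum_{(h,k)\in\mathcal P_i\cap\mathcal P_j}x_{hk}$. $\texttt{dist}(i,j)$ is the number of edges on the tree path between $i$ and $j$, and $d=\max_{i,j\in\mathcal N}\texttt{dist}(i,j)$. Voltage model: $v(p,q)=Rp+Xq+v_0\mathbf 1\in\mathbb R^N$ for a fixed $v_0\in\mathbb R$. Problem data: vectors $\underline v\le\bar v$, $\underline p\le\bar p$, $\underline q\le\bar q$ in $\mathbb R^N$ and reals $a_i^{P},a_i^{Q}>0$, $b_i^P,b_i^Q$. Algorithm DIST-OPT. For $i\in\mathcal N$, the algorithmic parent of $i$ is $\sigma_i$ if $\sigma_i\neq0$; if $\sigma_i=0$, $i$ has no algorithmic parent. Let $\mathcal C_i=\{j\in\mathcal N:\sigma_j=i\}$. For each $j\in\mathcal N$ having an algorithmic parent and each $t\in\mathbb N$, there are delays $\tau^{\uparrow}_j(t),\tau^{\downarrow}_j(t)\in\mathbb Z_{\ge0}$. Write $[x]_a^b=\min(\max(x,a),b)$ and $\lceil x\rceil_+=\max(x,0)$.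 Initialization ($t=0$): for all $i\in\mathcal N$, $z_i^P(0)=z_i^Q(0)=\underline\lambda_i(0)=\bar\lambda_i(0)=\lambda_i(0)=0$ and $\alpha_i(0)=\beta_i^P(0)=\beta_i^Q(0)=\hat\alpha_i(0)=\hat\beta_i^P(0)=\hat\beta_i^Q(0)=0$; any message $\alpha_i(s),\beta_i^P(s),\beta_i^Q(s)$ with $s<0$ is $0$; if $i$ has no algorithmic parent then $\hat\beta_i^P(t)=\hat\beta_i^Q(t)=0$ for all $t$. For $t=0,1,2,\dots$ and every $i\in\mathcal N$: (1) $p_i(t)=\bigl[(z_i^P(t)-b_i^P)/a_i^P\bigr]_{\underline p_i}^{\bar p_i}$ and $q_i(t)=\bigl[(z_i^Q(t)-b_i^Q)/a_i^Q\bigr]_{\underline q_i}^{\bar q_i}$. (2) $v(t)=v(p(t),q(t))$; $\underline\lambda_i(t+1)=\lceil\underline\lambda_i(t)+\gamma(\underline v_i-v_i(t))\rceil_+$, $\bar\lambda_i(t+1)=\lceil\bar\lambda_i(t)+\gamma(v_i(t)-\bar v_i)\rceil_+$, $\lambda_i(t+1)=\underline\lambda_i(t+1)-\bar\lambda_i(t+1)$, with step size $\gamma>0$. (3) $\alpha_i(t+1)=\lambda_i(t+1)+\sum_{j\in\mathcal C_i}\hat\alpha_j(t)$, and for each $j\in\mathcal C_i$: $\beta_j^P(t+1)=R_{ii}\bigl(\lambda_i(t+1)+\sum_{r\in\mathcal C_i\setminus\{j\}}\hat\alpha_r(t)\bigr)+\hat\beta_i^P(t)$ and $\beta_j^Q(t+1)=X_{ii}\bigl(\lambda_i(t+1)+\sum_{r\in\mathcal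 C_i\setminus\{j\}}\hat\alpha_r(t)\bigr)+\hat\beta_i^Q(t)$. For each $j$ with an algorithmic parent: $\hat\alpha_j(t+1)=\alpha_j(t+1-\tau^{\uparrow}_j(t))$, $\hat\beta_j^P(t+1)=\beta_j^P(t+1-\tau^{\downarrow}_j(t))$, $\hat\beta_j^Q(t+1)=\beta_j^Q(t+1-\tau^{\downarrow}_j(t))$. (4) $z_i^P(t+1)=R_{ii}\bigl(\lambda_i(t+1)+\sum_{j\in\mathcal C_i}\hat\alpha_j(t+1)\bigr)+\hat\beta_i^P(t+1)$ and $z_i^Q(t+1)=X_{ii}\bigl(\lambda_i(t+1)+\sum_{j\in\mathcal C_i}\hat\alpha_j(t+1)\bigr)+\hat\beta_i^Q(t+1)$. *)

theory Defs
  imports Complex_Main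
begin

text \<open>Nodes are 0..N, node 0 is the root. The edge (sigma k, k) is identified with its
 child endpoint k; rr k and xx k are its resistance and reactance.\<close>

record prob =
  nodes :: nat
  sigma :: "nat \<Rightarrow> nat"
  rr    :: "nat \<Rightarrow> real"
  xx    :: "nat \<Rightarrow> real"
  vnom  :: real
  vlo   :: "nat \<Rightarrow> real"
  vhi   :: "nat \<Rightarrow> real"
  plo   :: "nat \<Rightarrow> real"
  phi   :: "nat \<Rightarrow> real"
  qlo   :: "nat \<Rightarrow> real"
  qhi   :: "nat \<Rightarrow> real"
  aP    :: "nat \<Rightarrow> real"
  aQ    :: "nat \<Rightarrow> real"
  bP    :: "nat \<Rightarrow> real"
  bQ    :: "nat \<Rightarrow> real"
  gam   :: real
  tup   :: "nat \<Rightarrow> nat \<Rightarrow> nat"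
  tdn   :: "nat \<Rightarrow> nat \<Rightarrow> nat"

definition is_tree :: "nat \<Rightarrow> (nat \<Rightarrow> nat) \<Rightarrow> bool" where
  "is_tree n \<sigma> \<longleftrightarrow> (\<forall>i\<in>{1..n}. \<sigma> i \<le> n \<and> (\<exists>m. (\<sigma> ^^ m) i = 0))"

definition depth :: "(nat \<Rightarrow> nat) \<Rightarrow> nat \<Rightarrow> nat" where
  "depth \<sigma> i = (LEAST m. (\<sigma> ^^ m) i = 0)"

definition pathE :: "(nat \<Rightarrow> nat) \<Rightarrow> nat \<Rightarrow> nat set" where
  "pathE \<sigma> i = {(\<sigma> ^^ m) i | m. m < depth \<sigma> i}"

definition Rm :: "prob \<Rightarrow> nat \<Rightarrow> nat \<Rightarrow> real" where
  "Rm D i j = 2 * (\<Sum>k \<in> pathE (sigma D) i \<inter> pathE (sigma D) j. rr D k)"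

definition Xm :: "prob \<Rightarrow> nat \<Rightarrow> nat \<Rightarrow> real" where
  "Xm D i j = 2 * (\<Sum>k \<in> pathE (sigma D) i \<inter> pathE (sigma D) j. xx D k)"

text \<open>Number of edges on the tree path between i and j: the symmetric difference of
 the root paths.\<close>
definition tdist :: "prob \<Rightarrow> nat \<Rightarrow> nat \<Rightarrow> nat" where
  "tdist D i j = card (pathE (sigma D) i - pathE (sigma D) j)
               + card (pathE (sigma D) j - pathE (sigma D) i)"

definition diam :: "prob \<Rightarrow> nat" where
  "diam D = Max {tdist D i j | i j. i \<in> {1..nodes D} \<and> j \<in> {1..nodes D}}"

definition children :: "prob \<Rightarrow> nat \<Rightarrow> nat set" where
  "children D i = {j \<in> {1..nodes D}. sigma D j = i}"

record st =
  zP    :: "nat \<Rightarrow> real"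
  zQ    :: "nat \<Rightarrow> real"
  lamL  :: "nat \<Rightarrow> real"
  lamU  :: "nat \<Rightarrow> real"
  lam   :: "nat \<Rightarrow> real"
  alpha :: "nat \<Rightarrow> real"
  betaP :: "nat \<Rightarrow> real"
  betaQ :: "nat \<Rightarrow> real"
  ahat  :: "nat \<Rightarrow> real"
  bPhat :: "nat \<Rightarrow> real"
  bQhat :: "nat \<Rightarrow> real"

definition st0 :: st where
  "st0 = \<lparr>zP = (\<lambda>_. 0), zQ = (\<lambda>_. 0), lamL = (\<lambda>_. 0), lamU = (\<lambda>_. 0),
          lam = (\<lambda>_. 0), alpha = (\<lambda>_. 0), betaP = (\<lambda>_. 0), betaQ = (\<lambda>_. 0),
          ahat = (\<lambda>_. 0), bPhat = (\<lambda>_. 0), bQhat = (\<lambda>_. 0)\<rparr>"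

definition clamp :: "real \<Rightarrow> real \<Rightarrow> real \<Rightarrow> real" where
  "clamp lo hi x = min (max x lo) hi"

text \<open>One iteration: given the history H (H s is the state at time s, for s \<le> t),
 compute the state at time t+1.\<close>
definition step :: "prob \<Rightarrow> (nat \<Rightarrow> st) \<Rightarrow> nat \<Rightarrow> st" where
  "step D H t = (let
     cur = H t; n = nodes D; \<sigma> = sigma D;
     p = (\<lambda>i. clamp (plo D i) (phi D i) ((zP cur i - bP D i) / aP D i));
     q = (\<lambda>i. clamp (qlo D i) (qhi D i) ((zQ cur i - bQ D i) / aQ D i));
     v = (\<lambda>i. (\<Sum>j=1..n. Rm D i j * p j + Xm D i j * q j) + vnom D);
     lL = (\<lambda>i. max (lamL cur i + gam D * (vlo D i - v i)) 0);
     lU = (\<lambda>i. max (lamU cur i + gam D * (v i - vhi D i)) 0);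
     l = (\<lambda>i. lL i - lU i);
     a = (\<lambda>i. l i + (\<Sum>j\<in>children D i. ahat cur j));
     bp = (\<lambda>j. if \<sigma> j \<noteq> 0 then
             Rm D (\<sigma> j) (\<sigma> j) * (l (\<sigma> j) + (\<Sum>r\<in>children D (\<sigma> j) - {j}. ahat cur r))
               + bPhat cur (\<sigma> j) else 0);
     bq = (\<lambda>j. if \<sigma> j \<noteq> 0 then
             Xm D (\<sigma> j) (\<sigma> j) * (l (\<sigma> j) + (\<Sum>r\<in>children D (\<sigma> j) - {j}. ahat cur r))
               + bQhat cur (\<sigma> j) else 0);
     mid = cur\<lparr>lamL := lL, lamU := lU, lam := l, alpha := a, betaP := bp, betaQ := bq\<rparr>;
     H' = H(Suc t := mid);
     ah = (\<lambda>j. if \<sigma> j \<noteq> 0 then alpha (H' (Suc t - tup D j t)) j else 0);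
     bph = (\<lambda>j. if \<sigma> j \<noteq> 0 then betaP (H' (Suc t - tdn D j t)) j else 0);
     bqh = (\<lambda>j. if \<sigma> j \<noteq> 0 then betaQ (H' (Suc t - tdn D j t)) j else 0);
     zp = (\<lambda>i. Rm D i i * (l i + (\<Sum>j\<in>children D i. ah j)) + bph i);
     zq = (\<lambda>i. Xm D i i * (l i + (\<Sum>j\<in>children D i. ah j)) + bqh i)
   in mid\<lparr>zP := zp, zQ := zq, ahat := ah, bPhat := bph, bQhat := bqh\<rparr>)"

fun run :: "prob \<Rightarrow> nat \<Rightarrow> (nat \<Rightarrow> st)" where
  "run D 0 = (\<lambda>_. st0)"
| "run D (Suc t) = (run D t)(Suc t := step D (run D t) t)"

definition state :: "prob \<Rightarrow> nat \<Rightarrow> st" where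
  "state D t = run D t t"

definition dd :: "prob \<Rightarrow> nat \<Rightarrow> nat \<Rightarrow> nat" where
  "dd D i j = (if tdist D i j \<le> 1 then 0 else tdist D i j - 1)"

end

theory Submission
  imports Defs
begin

text \<open>Unrolling the message recursions, alpha_i(t) is a sum of the multipliers lam_k over the
  subtree of i, while beta_j(t) and z_i(t) are sums of R_jk lam_k over the nodes outside the
  subtree of j, resp. over all nodes, each lam_k sampled at a single earlier time. The weights
  fit because R_ik = R_ii inside the subtree of i and R_ik = R_(sigma i) k outside it. The
  sampling time is obtained by following the messages along the tree path; each hop costs one
  iteration plus a link delay of at most tau, so lam_k enters z_i(t) between dist(i,k) - 1 and
  (tau + 1) dist(i,k) - 1 iterations late, exactly dist(i,k) - 1 when tau = 0.\<close>

definition path_weight :: "prob \<Rightarrow> (nat \<Rightarrow> real) \<Rightarrow> nat \<Rightarrow> nat \<Rightarrow> real" where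
  "path_weight D w i j = 2 * (\<Sum>k \<in> pathE (sigma D) i \<inter> pathE (sigma D) j. w k)"

lemma Rm_eq_path_weight: "Rm D = path_weight D (rr D)"
  by (simp add: fun_eq_iff Rm_def path_weight_def)

lemma Xm_eq_path_weight: "Xm D = path_weight D (xx D)"
  by (simp add: fun_eq_iff Xm_def path_weight_def)

lemma finite_pathE: "finite (pathE \<sigma> i)"
  by (simp add: pathE_def)

section \<open>One iteration of DIST-OPT\<close>

lemma run_eq_state: "s \<le> t \<Longrightarrow> run D t s = state D s"
proof (induction t)
  case (Suc t)
  then show ?case by (cases "s = Suc t") (auto simp: state_def)
qed (simp add: state_def)

lemma state_0: "state D 0 = st0"
  by (simp add: state_def)

lemma lam_state_0: "lam (state D 0) k = 0"
  by (simp add: state_0 st0_def)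

lemma state_Suc: "state D (Suc t) = step D (run D t) t"
  by (simp add: state_def)

text \<open>When the message held at time t on the link of j was sent. Root children send nothing.\<close>
definition sent_at :: "(prob \<Rightarrow> nat \<Rightarrow> nat \<Rightarrow> nat) \<Rightarrow> prob \<Rightarrow> nat \<Rightarrow> nat \<Rightarrow> nat" where
  "sent_at delay D j t = (if sigma D j = 0 then t else case t of 0 \<Rightarrow> 0 | Suc u \<Rightarrow> Suc u - delay D j u)"

lemma sent_at_le: "sent_at delay D j t \<le> t"
  by (simp add: sent_at_def split: nat.split)

lemma sent_at_lag:
  assumes "\<And>u. sigma D j \<noteq> 0 \<Longrightarrow> delay D j u \<le> \<tau>"
  shows "t \<le> sent_at delay D j t + \<tau>"
proof (cases t)
  case (Suc u)
  then show ?thesis using assms[of u] by (cases "sigma D j = 0") (simp_all add: sent_at_def)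
qed (simp add: sent_at_def)

lemma alpha_Suc:
  "alpha (state D (Suc t)) i = lam (state D (Suc t)) i + (\<Sum>j\<in>children D i. ahat (state D t) j)"
  by (simp add: state_Suc step_def Let_def run_eq_state)

lemma ahat_eq:
  "sigma D j \<noteq> 0 \<Longrightarrow> ahat (state D t) j = alpha (state D (sent_at tup D j t)) j"
proof (cases t)
  case (Suc u)
  assume "sigma D j \<noteq> 0"
  then show ?thesis using Suc
    by (cases "tup D j u = 0") (simp_all add: state_Suc step_def Let_def run_eq_state sent_at_def)
qed (simp add: state_0 st0_def sent_at_def)

lemma beta_Suc:
  "betaP (state D (Suc t)) j = (if sigma D j = 0 then 0 else
     Rm D (sigma D j) (sigma D j) * (lam (state D (Suc t)) (sigma D j)
       + (\<Sum>r\<in>children D (sigma D j) - {j}. ahat (state D t) r)) + bPhat (state D t) (sigma D j))"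
  "betaQ (state D (Suc t)) j = (if sigma D j = 0 then 0 else
     Xm D (sigma D j) (sigma D j) * (lam (state D (Suc t)) (sigma D j)
       + (\<Sum>r\<in>children D (sigma D j) - {j}. ahat (state D t) r)) + bQhat (state D t) (sigma D j))"
  by (simp_all add: state_Suc step_def Let_def run_eq_state)

lemma bhat_eq:
  "bPhat (state D t) j = (if sigma D j = 0 then 0 else betaP (state D (sent_at tdn D j t)) j)"
  "bQhat (state D t) j = (if sigma D j = 0 then 0 else betaQ (state D (sent_at tdn D j t)) j)"
  by (cases t; cases "tdn D j (t - 1) = 0";
      simp add: state_0 st0_def state_Suc step_def Let_def run_eq_state sent_at_def)+

lemma z_eq:
  "zP (state D t) i = Rm D i i * (lam (state D t) i + (\<Sum>j\<in>children D i. ahat (state D t) j))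
     + bPhat (state D t) i"
  "zQ (state D t) i = Xm D i i * (lam (state D t) i + (\<Sum>j\<in>children D i. ahat (state D t) j))
     + bQhat (state D t) i"
  by (cases t; simp add: state_0 st0_def state_Suc step_def Let_def run_eq_state)+

section \<open>Delay windows\<close>

text \<open>s trails t by between a and b steps; truncated subtraction makes the window saturate at
  time 0.\<close>
definition lags :: "nat \<Rightarrow> nat \<Rightarrow> nat \<Rightarrow> nat \<Rightarrow> bool" where
  "lags a b t s \<longleftrightarrow> t - b \<le> s \<and> s \<le> t - a"

lemma lags_0: "lags a b 0 0"
  by (simp add: lags_def)

lemma lags_self: "a \<le> b \<Longrightarrow> lags a b t (t - a)"
  by (simp add: lags_def)

lemma lags_exact: "lags a a t s \<Longrightarrow> s = t - a"
  by (simp add: lags_def)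

lemma lags_bound: "lags a b t s \<Longrightarrow> s \<le> t \<and> t - s \<le> b"
  unfolding lags_def by linarith

lemma lags_received:
  assumes "lags a ((\<tau> + 1) * a) t' s" "t' \<le> t" "t \<le> t' + \<tau>"
  shows "lags a ((\<tau> + 1) * Suc a - 1) t s"
  using assms unfolding lags_def by (simp add: algebra_simps) linarith

lemma lags_relayed:
  assumes "lags a ((\<tau> + 1) * a) t' s" "t' \<le> t" "t \<le> t' + \<tau>"
  shows "lags (Suc a) ((\<tau> + 1) * Suc a) (Suc t) s"
  using assms unfolding lags_def by (simp add: algebra_simps) linarith

definition delays_le :: "prob \<Rightarrow> nat \<Rightarrow> bool" where
  "delays_le D \<tau> \<longleftrightarrow> (\<forall>j\<in>{1..nodes D}. sigma D j \<noteq> 0 \<longrightarrow> (\<forall>t. tup D j t \<le> \<tau> \<and> tdn D j t \<le> \<tau>))"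

section \<open>The radial tree\<close>

locale radial =
  fixes D :: prob
  assumes tree: "is_tree (nodes D) (sigma D)"
begin

abbreviation "V \<equiv> {1..nodes D}"
abbreviation "\<sigma> \<equiv> sigma D"
abbreviation "anc \<equiv> pathE (sigma D)"
abbreviation "ch \<equiv> children D"

lemma parent_in_nodes: "i \<in> V \<Longrightarrow> \<sigma> i \<noteq> 0 \<Longrightarrow> \<sigma> i \<in> V"
  using tree by (auto simp: is_tree_def)

lemma depth_parent:
  assumes "i \<in> V" shows "depth \<sigma> i = Suc (depth \<sigma> (\<sigma> i))"
proof -
  obtain m where "(\<sigma> ^^ m) i = 0" using tree assms unfolding is_tree_def by blast
  then have "(LEAST m. (\<sigma> ^^ m) i = 0) = Suc (LEAST m. (\<sigma> ^^ Suc m) i = 0)"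
    by (rule Least_Suc) (use assms in simp)
  then show ?thesis by (simp add: depth_def funpow_swap1)
qed

lemma anc_0: "anc 0 = {}"
  by (simp add: pathE_def depth_def)

lemma anc_eq_image: "anc i = (\<lambda>m. (\<sigma> ^^ m) i) ` {..<depth \<sigma> i}"
  by (auto simp: pathE_def)

lemma anc_parent: "i \<in> V \<Longrightarrow> anc i = insert i (anc (\<sigma> i))"
  by (simp add: anc_eq_image depth_parent lessThan_Suc_eq_insert_0 image_image funpow_Suc_right
      del: funpow.simps)

lemma anc_induct [consumes 1, case_names parent]:
  assumes "i \<in> V" and "\<And>i. i \<in> V \<Longrightarrow> (\<sigma> i \<noteq> 0 \<Longrightarrow> P (\<sigma> i)) \<Longrightarrow> P i"
  shows "P i"
  using assms(1)
proof (induction "depth \<sigma> i" arbitrary: i rule: less_induct)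
  case less
  show ?case
    by (rule assms(2)[OF less.prems]) (use less parent_in_nodes depth_parent in auto)
qed

lemma self_in_anc: "i \<in> V \<Longrightarrow> i \<in> anc i"
  by (simp add: anc_parent)

lemma anc_mono: "k \<in> V \<Longrightarrow> i \<in> anc k \<Longrightarrow> anc i \<subseteq> anc k"
proof (induction k rule: anc_induct)
  case (parent k)
  then show ?case using anc_parent[OF parent.hyps] by (cases "\<sigma> k = 0") (auto simp: anc_0)
qed

lemma depth_anc_le: "k \<in> V \<Longrightarrow> i \<in> anc k \<Longrightarrow> depth \<sigma> i \<le> depth \<sigma> k"
proof (induction k rule: anc_induct)
  case (parent k)
  have "depth \<sigma> (\<sigma> k) \<le> depth \<sigma> k" using depth_parent[OF parent.hyps] by simp
  then show ?case using parent anc_parent[OF parent.hyps] by (cases "\<sigma> k = 0") (auto simp: anc_0)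
qed

lemma self_notin_anc_parent:
  assumes "i \<in> V" shows "i \<notin> anc (\<sigma> i)"
proof
  assume i: "i \<in> anc (\<sigma> i)"
  then have "\<sigma> i \<in> V" using assms parent_in_nodes anc_0 by (cases "\<sigma> i = 0") auto
  then show False using depth_anc_le[OF _ i] depth_parent[OF assms] by simp
qed

lemma children_subset_nodes: "ch i \<subseteq> V"
  by (auto simp: children_def)

lemma finite_children: "finite (ch i)"
  by (rule finite_subset[OF children_subset_nodes]) simp

lemma mem_children_iff: "j \<in> ch i \<longleftrightarrow> j \<in> V \<and> \<sigma> j = i"
  by (simp add: children_def)

lemma children_inter_anc_ex:
  assumes "i \<in> V" "k \<in> V"
  shows "\<exists>c. ch i \<inter> anc k = (if i \<in> anc k \<and> i \<noteq> k then {c} else {})"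
  using assms(2)
proof (induction k rule: anc_induct)
  case (parent k)
  have IH: "\<exists>c. ch i \<inter> anc (\<sigma> k) = (if i \<in> anc (\<sigma> k) \<and> i \<noteq> \<sigma> k then {c} else {})"
  proof (cases "\<sigma> k = 0")
    case True then show ?thesis by (simp add: anc_0)
  qed (use parent in blast)
  have k: "anc k = insert k (anc (\<sigma> k))" "k \<notin> anc (\<sigma> k)"
    using anc_parent[OF parent.hyps] self_notin_anc_parent[OF parent.hyps] by simp_all
  show ?case
  proof (cases "\<sigma> k = i")
    case True
    then have "ch i \<inter> anc (\<sigma> k) = {}" using IH by simp
    then have "ch i \<inter> anc k = {k}" using k True parent.hyps by (auto simp: mem_children_iff)
    moreover have "i \<in> anc k" "i \<noteq> k" using k True self_in_anc[OF assms(1)] by auto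
    ultimately show ?thesis by (intro exI[of _ k]) simp
  next
    case False
    then have "ch i \<inter> anc k = ch i \<inter> anc (\<sigma> k)" using k by (auto simp: mem_children_iff)
    moreover have "(i \<in> anc k \<and> i \<noteq> k) \<longleftrightarrow> (i \<in> anc (\<sigma> k) \<and> i \<noteq> \<sigma> k)"
      using k False by auto
    ultimately show ?thesis using IH by simp
  qed
qed

definition child_towards :: "nat \<Rightarrow> nat \<Rightarrow> nat" where
  "child_towards i k = the_elem (ch i \<inter> anc k)"

lemma children_inter_anc:
  assumes "i \<in> V" "k \<in> V"
  shows "ch i \<inter> anc k = (if i \<in> anc k \<and> i \<noteq> k then {child_towards i k} else {})"
proof -
  obtain c where c: "ch i \<inter> anc k = (if i \<in> anc k \<and> i \<noteq> k then {c} else {})"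
    using children_inter_anc_ex[OF assms] by blast
  then show ?thesis by (simp add: child_towards_def)
qed

lemma child_towards:
  assumes "i \<in> V" "k \<in> V" "i \<in> anc k" "i \<noteq> k"
  shows "child_towards i k \<in> V" "\<sigma> (child_towards i k) = i" "child_towards i k \<in> anc k"
proof -
  have "child_towards i k \<in> ch i \<inter> anc k"
    using children_inter_anc[OF assms(1,2)] assms(3,4) by simp
  then show "child_towards i k \<in> V" "\<sigma> (child_towards i k) = i" "child_towards i k \<in> anc k"
    by (simp_all add: mem_children_iff)
qed

lemma sum_children_anc:
  assumes "i \<in> V"
  shows "(\<Sum>c\<in>ch i - E. \<Sum>k\<in>V. if c \<in> anc k then g c k else 0) =
    (\<Sum>k\<in>V. if i \<in> anc k \<and> i \<noteq> k \<and> child_towards i k \<notin> E then g (child_towards i k) k else 0)"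
proof -
  have "(\<Sum>c\<in>ch i - E. \<Sum>k\<in>V. if c \<in> anc k then g c k else 0) =
      (\<Sum>k\<in>V. \<Sum>c\<in>ch i - E. if c \<in> anc k then g c k else 0)"
    by (rule sum.swap)
  also have "\<dots> = (\<Sum>k\<in>V. \<Sum>c\<in>ch i \<inter> anc k - E. g c k)"
  proof (rule sum.cong[OF refl])
    fix k
    have "ch i \<inter> anc k - E = (ch i - E) \<inter> anc k" by blast
    then show "(\<Sum>c\<in>ch i - E. if c \<in> anc k then g c k else 0) = (\<Sum>c\<in>ch i \<inter> anc k - E. g c k)"
      by (simp add: sum.inter_restrict finite_children)
  qed
  also have "\<dots> = (\<Sum>k\<in>V. if i \<in> anc k \<and> i \<noteq> k \<and> child_towards i k \<notin> E then g (child_towards i k) k else 0)"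
    by (rule sum.cong[OF refl]) (simp add: children_inter_anc[OF assms] insert_Diff_if)
  finally show ?thesis .
qed

lemma tdist_self: "tdist D i i = 0"
  by (simp add: tdist_def)

lemma tdist_towards:
  assumes "j \<in> V" "k \<in> V" "j \<in> anc k"
  shows "tdist D (\<sigma> j) k = Suc (tdist D j k)"
proof -
  have j: "anc j = insert j (anc (\<sigma> j))" "j \<notin> anc (\<sigma> j)"
    using anc_parent[OF assms(1)] self_notin_anc_parent[OF assms(1)] by simp_all
  have "anc j \<subseteq> anc k" using anc_mono[OF assms(2,3)] .
  then have "anc (\<sigma> j) - anc k = anc j - anc k"
    and "anc k - anc (\<sigma> j) = insert j (anc k - anc j)"
    using j assms(3) by auto
  moreover have "j \<notin> anc k - anc j" using j by simp
  ultimately show ?thesis unfolding tdist_def by (simp add: finite_pathE)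
qed

lemma tdist_away:
  assumes "j \<in> V" "j \<notin> anc k"
  shows "tdist D j k = Suc (tdist D (\<sigma> j) k)"
proof -
  have j: "anc j = insert j (anc (\<sigma> j))" "j \<notin> anc (\<sigma> j)"
    using anc_parent[OF assms(1)] self_notin_anc_parent[OF assms(1)] by simp_all
  then have "anc j - anc k = insert j (anc (\<sigma> j) - anc k)" "anc k - anc j = anc k - anc (\<sigma> j)"
    using assms(2) by auto
  moreover have "j \<notin> anc (\<sigma> j) - anc k" using j by simp
  ultimately show ?thesis by (simp add: tdist_def finite_pathE)
qed

lemma tdist_le_diam: "i \<in> V \<Longrightarrow> k \<in> V \<Longrightarrow> tdist D i k \<le> diam D"
  unfolding diam_def by (rule Max_ge, rule finite_image_set2) auto

lemma path_weight_0: "path_weight D w 0 k = 0"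
  by (simp add: path_weight_def anc_0)

lemma path_weight_anc: "k \<in> V \<Longrightarrow> i \<in> anc k \<Longrightarrow> path_weight D w i k = path_weight D w i i"
  using anc_mono[of k i] by (simp add: path_weight_def Int_absorb2)

lemma path_weight_away: "i \<in> V \<Longrightarrow> i \<notin> anc k \<Longrightarrow> path_weight D w i k = path_weight D w (\<sigma> i) k"
  using anc_parent[of i] by (simp add: path_weight_def)

section \<open>Sampling times\<close>

lemma sent_at_window:
  assumes "delays_le D \<tau>" "j \<in> V"
  shows "t \<le> sent_at tup D j t + \<tau>" "t \<le> sent_at tdn D j t + \<tau>"
  using assms by (auto simp: delays_le_def intro!: sent_at_lag)

text \<open>For k in the subtree of i, the sum alpha i t contains lam k sampled at time
  alpha_origin i k t; beta_origin and z_origin play the same role for beta and z.\<close>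
function alpha_origin :: "nat \<Rightarrow> nat \<Rightarrow> nat \<Rightarrow> nat" where
  "alpha_origin i k 0 = 0"
| "alpha_origin i k (Suc u) = (if k = i then Suc u
     else alpha_origin (child_towards i k) k (sent_at tup D (child_towards i k) u))"
  by pat_completeness auto
termination
  by (relation "measure (\<lambda>(i, k, t). t)") (auto simp: less_Suc_eq_le sent_at_le)

abbreviation ahat_origin :: "nat \<Rightarrow> nat \<Rightarrow> nat \<Rightarrow> nat" where
  "ahat_origin c k t \<equiv> alpha_origin c k (sent_at tup D c t)"

text \<open>A root child has beta = 0 and zero weights outside its subtree, so its first branch
  only has to return some time inside the admissible window.\<close>
function beta_origin :: "nat \<Rightarrow> nat \<Rightarrow> nat \<Rightarrow> nat" where
  "beta_origin j k 0 = 0"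
| "beta_origin j k (Suc u) =
    (if \<sigma> j = 0 then Suc u - (tdist D j k - 1)
     else if k = \<sigma> j then Suc u
     else if \<sigma> j \<in> anc k then ahat_origin (child_towards (\<sigma> j) k) k u
     else beta_origin (\<sigma> j) k (sent_at tdn D (\<sigma> j) u))"
  by pat_completeness auto
termination
  by (relation "measure (\<lambda>(j, k, t). t)") (auto simp: less_Suc_eq_le sent_at_le)

abbreviation bhat_origin :: "nat \<Rightarrow> nat \<Rightarrow> nat \<Rightarrow> nat" where
  "bhat_origin j k t \<equiv> beta_origin j k (sent_at tdn D j t)"

definition z_origin :: "nat \<Rightarrow> nat \<Rightarrow> nat \<Rightarrow> nat" where
  "z_origin i k t = (if k = i then t
     else if i \<in> anc k then ahat_origin (child_towards i k) k t else bhat_origin i k t)"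

lemma alpha_origin_lags:
  assumes delays: "delays_le D \<tau>"
  shows "i \<in> V \<Longrightarrow> k \<in> V \<Longrightarrow> i \<in> anc k \<Longrightarrow>
    lags (tdist D i k) ((\<tau> + 1) * tdist D i k) t (alpha_origin i k t)"
proof (induction i k t rule: alpha_origin.induct)
  case (1 i k)
  show ?case by (simp add: lags_0)
next
  case (2 i k u)
  show ?case
  proof (cases "k = i")
    case False
    define c where "c = child_towards i k"
    have c: "c \<in> V" "\<sigma> c = i" "c \<in> anc k"
      using child_towards[OF 2(2-4) False[symmetric]] by (simp_all add: c_def)
    have "lags (tdist D c k) ((\<tau> + 1) * tdist D c k) (sent_at tup D c u) (ahat_origin c k u)"
      using 2 False c by (simp add: c_def)
    then have "lags (Suc (tdist D c k)) ((\<tau> + 1) * Suc (tdist D c k)) (Suc u) (ahat_origin c k u)"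
      by (rule lags_relayed) (simp_all add: sent_at_le sent_at_window[OF delays c(1)])
    moreover have "tdist D i k = Suc (tdist D c k)" using tdist_towards[OF c(1) 2(3) c(3)] c(2) by simp
    ultimately show ?thesis using False by (simp add: c_def)
  qed (simp add: tdist_self lags_def)
qed

lemma beta_origin_lags:
  assumes delays: "delays_le D \<tau>"
  shows "j \<in> V \<Longrightarrow> k \<in> V \<Longrightarrow> j \<notin> anc k \<Longrightarrow>
    lags (tdist D j k - 1) ((\<tau> + 1) * (tdist D j k - 1)) t (beta_origin j k t)"
proof (induction j k t rule: beta_origin.induct)
  case (1 j k)
  show ?case by (simp add: lags_0)
next
  case (2 j k u)
  define p where "p = \<sigma> j"
  have d: "tdist D j k = Suc (tdist D p k)" using tdist_away[OF 2(2,4)] by (simp add: p_def)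
  consider "p = 0" | "p \<noteq> 0" "k = p" | "p \<noteq> 0" "k \<noteq> p" "p \<in> anc k" | "p \<noteq> 0" "p \<notin> anc k"
    by blast
  then show ?case
  proof cases
    case 1
    then show ?thesis by (simp add: p_def lags_self)
  next
    case 2
    then show ?thesis using d by (simp add: p_def tdist_self lags_def)
  next
    case 3
    define c where "c = child_towards p k"
    have pV: "p \<in> V" using parent_in_nodes[OF 2(2)] 3 by (simp add: p_def)
    have c: "c \<in> V" "\<sigma> c = p" "c \<in> anc k"
      using child_towards[OF pV 2(3) 3(3)] 3(2) by (simp_all add: c_def)
    have "lags (tdist D c k) ((\<tau> + 1) * tdist D c k) (sent_at tup D c u) (ahat_origin c k u)"
      by (rule alpha_origin_lags[OF delays c(1) 2(3) c(3)])
    then have "lags (Suc (tdist D c k)) ((\<tau> + 1) * Suc (tdist D c k)) (Suc u) (ahat_origin c k u)"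
      by (rule lags_relayed) (simp_all add: sent_at_le sent_at_window[OF delays c(1)])
    moreover have "tdist D p k = Suc (tdist D c k)" using tdist_towards[OF c(1) 2(3) c(3)] c(2) by simp
    ultimately show ?thesis using 3 d by (simp add: p_def c_def)
  next
    case 4
    have pV: "p \<in> V" using parent_in_nodes[OF 2(2)] 4 by (simp add: p_def)
    obtain e where e: "tdist D p k = Suc e" using tdist_away[OF pV 4(2)] by blast
    have "k \<noteq> p" using 4(2) self_in_anc[OF 2(3)] by blast
    then have "lags e ((\<tau> + 1) * e) (sent_at tdn D p u) (bhat_origin p k u)"
      using 2(1) 4 pV 2(3) e by (simp add: p_def)
    then have "lags (Suc e) ((\<tau> + 1) * Suc e) (Suc u) (bhat_origin p k u)"
      by (rule lags_relayed) (simp_all add: sent_at_le sent_at_window[OF delays pV])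
    moreover have "beta_origin j k (Suc u) = bhat_origin p k u" using 4 \<open>k \<noteq> p\<close> by (simp add: p_def)
    ultimately show ?thesis using d e by simp
  qed
qed

lemma z_origin_lags:
  assumes delays: "delays_le D \<tau>" and "i \<in> V" "k \<in> V"
  shows "lags (tdist D i k - 1) ((\<tau> + 1) * tdist D i k - 1) t (z_origin i k t)"
proof -
  consider "k = i" | "k \<noteq> i" "i \<in> anc k" | "i \<notin> anc k" by blast
  then show ?thesis
  proof cases
    case 1
    then show ?thesis by (simp add: z_origin_def tdist_self lags_def)
  next
    case 2
    define c where "c = child_towards i k"
    have c: "c \<in> V" "\<sigma> c = i" "c \<in> anc k"
      using child_towards[OF assms(2,3) 2(2)] 2(1) by (simp_all add: c_def)
    have "lags (tdist D c k) ((\<tau> + 1) * tdist D c k) (sent_at tup D c t) (ahat_origin c k t)"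
      by (rule alpha_origin_lags[OF delays c(1) assms(3) c(3)])
    then have "lags (tdist D c k) ((\<tau> + 1) * Suc (tdist D c k) - 1) t (ahat_origin c k t)"
      by (rule lags_received) (simp_all add: sent_at_le sent_at_window[OF delays c(1)])
    moreover have "tdist D i k = Suc (tdist D c k)" using tdist_towards[OF c(1) assms(3) c(3)] c(2) by simp
    ultimately show ?thesis using 2 by (simp add: z_origin_def c_def)
  next
    case 3
    have "lags (tdist D i k - 1) ((\<tau> + 1) * (tdist D i k - 1)) (sent_at tdn D i t) (bhat_origin i k t)"
      by (rule beta_origin_lags[OF delays assms(2,3) 3])
    then have "lags (tdist D i k - 1) ((\<tau> + 1) * Suc (tdist D i k - 1) - 1) t (bhat_origin i k t)"
      by (rule lags_received) (simp_all add: sent_at_le sent_at_window[OF delays assms(2)])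
    moreover have "tdist D i k \<noteq> 0" using tdist_away[OF assms(2) 3] by simp
    moreover have "k \<noteq> i" using 3 self_in_anc[OF assms(3)] by blast
    ultimately show ?thesis using 3 by (simp add: z_origin_def)
  qed
qed

section \<open>Messages as sampled sums of multipliers\<close>

lemma sum_anc_split:
  assumes "i \<in> V"
  shows "(\<Sum>k\<in>V. if i \<in> anc k then f k else 0) = f i + (\<Sum>k\<in>V. if i \<in> anc k \<and> i \<noteq> k then f k else 0)"
proof -
  have "(\<Sum>k\<in>V. if i \<in> anc k then f k else 0) =
      (\<Sum>k\<in>V. (if k = i then f i else 0) + (if i \<in> anc k \<and> i \<noteq> k then f k else 0))"
    by (rule sum.cong) (auto simp: self_in_anc)
  then show ?thesis using assms by (simp add: sum.distrib)
qed

lemma ahat_children_sum: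
  assumes "i \<in> V"
    and alpha_sum: "\<And>c. c \<in> ch i \<Longrightarrow> alpha (state D (sent_at tup D c t)) c =
      (\<Sum>k\<in>V. if c \<in> anc k then lam (state D (ahat_origin c k t)) k else 0)"
  shows "(\<Sum>c\<in>ch i - E. ahat (state D t) c) = (\<Sum>k\<in>V. if i \<in> anc k \<and> i \<noteq> k \<and> child_towards i k \<notin> E
      then lam (state D (ahat_origin (child_towards i k) k t)) k else 0)"
proof -
  have "(\<Sum>c\<in>ch i - E. ahat (state D t) c) =
      (\<Sum>c\<in>ch i - E. \<Sum>k\<in>V. if c \<in> anc k then lam (state D (ahat_origin c k t)) k else 0)"
  proof (rule sum.cong[OF refl])
    fix c assume "c \<in> ch i - E"
    moreover have "i \<noteq> 0" using assms(1) by simp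
    ultimately show "ahat (state D t) c =
        (\<Sum>k\<in>V. if c \<in> anc k then lam (state D (ahat_origin c k t)) k else 0)"
      using ahat_eq[of D c t] alpha_sum by (simp add: mem_children_iff)
  qed
  also have "\<dots> = (\<Sum>k\<in>V. if i \<in> anc k \<and> i \<noteq> k \<and> child_towards i k \<notin> E
      then lam (state D (ahat_origin (child_towards i k) k t)) k else 0)"
    by (rule sum_children_anc[OF assms(1)])
  finally show ?thesis .
qed

lemma alpha_eq_sum:
  "i \<in> V \<Longrightarrow> alpha (state D t) i = (\<Sum>k\<in>V. if i \<in> anc k then lam (state D (alpha_origin i k t)) k else 0)"
proof (induction t arbitrary: i rule: less_induct)
  case (less t)
  show ?case
  proof (cases t)
    case 0
    show ?thesis unfolding \<open>t = 0\<close> by (simp add: state_0 st0_def lam_state_0 cong: if_cong)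
  next
    case (Suc u)
    have "alpha (state D (sent_at tup D c u)) c =
        (\<Sum>k\<in>V. if c \<in> anc k then lam (state D (ahat_origin c k u)) k else 0)" if "c \<in> ch i" for c
    proof -
      have "c \<in> V" using that children_subset_nodes by blast
      moreover have "sent_at tup D c u < t" using Suc sent_at_le[of tup D c u] by simp
      ultimately show ?thesis using less.IH by blast
    qed
    then have "(\<Sum>c\<in>ch i. ahat (state D u) c) = (\<Sum>k\<in>V. if i \<in> anc k \<and> i \<noteq> k
        then lam (state D (ahat_origin (child_towards i k) k u)) k else 0)"
      using ahat_children_sum[OF less.prems, of u "{}"] by simp
    then have "alpha (state D t) i = lam (state D (Suc u)) i + (\<Sum>k\<in>V. if i \<in> anc k \<and> i \<noteq> k
        then lam (state D (ahat_origin (child_towards i k) k u)) k else 0)"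
      by (simp add: Suc alpha_Suc)
    also have "\<dots> = (\<Sum>k\<in>V. if i \<in> anc k then lam (state D (alpha_origin i k t)) k else 0)"
      unfolding sum_anc_split[OF less.prems] Suc by (simp cong: if_cong)
    finally show ?thesis .
  qed
qed

lemma ahat_children_eq_sum:
  assumes "i \<in> V"
  shows "(\<Sum>c\<in>ch i - E. ahat (state D t) c) = (\<Sum>k\<in>V. if i \<in> anc k \<and> i \<noteq> k \<and> child_towards i k \<notin> E
      then lam (state D (ahat_origin (child_towards i k) k t)) k else 0)"
  by (rule ahat_children_sum[OF assms], rule alpha_eq_sum) (use children_subset_nodes in blast)

lemma beta_summand_split:
  assumes "j \<in> V" "\<sigma> j \<noteq> 0" "k \<in> V"
  shows "(if j \<notin> anc k then path_weight D w j k * g k (beta_origin j k (Suc u)) else 0) =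
    (if k = \<sigma> j then path_weight D w (\<sigma> j) (\<sigma> j) * g k (Suc u) else 0)
    + path_weight D w (\<sigma> j) (\<sigma> j) * (if \<sigma> j \<in> anc k \<and> \<sigma> j \<noteq> k \<and> child_towards (\<sigma> j) k \<noteq> j
        then g k (ahat_origin (child_towards (\<sigma> j) k) k u) else 0)
    + (if \<sigma> j \<notin> anc k then path_weight D w (\<sigma> j) k * g k (bhat_origin (\<sigma> j) k u) else 0)"
proof -
  let ?p = "\<sigma> j"
  have pV: "?p \<in> V" using parent_in_nodes assms(1,2) by simp
  have W: "path_weight D w j k = path_weight D w ?p k" if "j \<notin> anc k"
    using path_weight_away[OF assms(1) that] .
  consider "k = ?p" | "k \<noteq> ?p" "?p \<in> anc k" | "?p \<notin> anc k" by blast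
  then show ?thesis
  proof cases
    case 1
    then have "j \<notin> anc k" using self_notin_anc_parent[OF assms(1)] by simp
    then show ?thesis using 1 W assms(2) self_in_anc[OF pV] by simp
  next
    case 2
    have c: "ch ?p \<inter> anc k = {child_towards ?p k}" using children_inter_anc[OF pV assms(3)] 2 by simp
    have "j \<in> ch ?p" using assms(1) by (simp add: mem_children_iff)
    then have "j \<in> anc k \<longleftrightarrow> j \<in> ch ?p \<inter> anc k" by blast
    then have "j \<in> anc k \<longleftrightarrow> child_towards ?p k = j" unfolding c by auto
    moreover have "path_weight D w ?p k = path_weight D w ?p ?p" using path_weight_anc[OF assms(3) 2(2)] .
    ultimately show ?thesis using 2 W assms(2) by (cases "child_towards ?p k = j") simp_all
  next
    case 3
    have "j \<notin> anc k"
    proof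
      assume "j \<in> anc k"
      then have "anc j \<subseteq> anc k" using anc_mono[OF assms(3)] by blast
      moreover have "?p \<in> anc j" using anc_parent[OF assms(1)] self_in_anc[OF pV] by simp
      ultimately show False using 3 by blast
    qed
    moreover have "k \<noteq> ?p" using 3 self_in_anc[OF assms(3)] by blast
    ultimately show ?thesis using 3 W assms(2) by simp
  qed
qed

lemma z_summand_split:
  assumes "i \<in> V" "k \<in> V"
  shows "path_weight D w i k * g k (z_origin i k t) =
    (if k = i then path_weight D w i i * g k t else 0)
    + path_weight D w i i * (if i \<in> anc k \<and> i \<noteq> k then g k (ahat_origin (child_towards i k) k t) else 0)
    + (if i \<notin> anc k then path_weight D w i k * g k (bhat_origin i k t) else 0)"
proof -
  consider "k = i" | "k \<noteq> i" "i \<in> anc k" | "i \<notin> anc k" by blast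
  then show ?thesis
  proof cases
    case 1
    then show ?thesis using self_in_anc[OF assms(1)] by (simp add: z_origin_def)
  next
    case 2
    then show ?thesis using path_weight_anc[OF assms(2) 2(2)] by (simp add: z_origin_def)
  next
    case 3
    then have "k \<noteq> i" using self_in_anc[OF assms(2)] by blast
    then show ?thesis using 3 by (simp add: z_origin_def)
  qed
qed

end

text \<open>The recursions shared by the P- and Q-messages; w is the resistance resp. reactance.\<close>
locale message_sums = radial +
  fixes w :: "nat \<Rightarrow> real" and beta bhat z :: "st \<Rightarrow> nat \<Rightarrow> real"
  assumes beta_init: "beta (state D 0) j = 0"
    and beta_rec: "beta (state D (Suc u)) j = (if sigma D j = 0 then 0 else
      path_weight D w (sigma D j) (sigma D j) * (lam (state D (Suc u)) (sigma D j)
        + (\<Sum>r\<in>children D (sigma D j) - {j}. ahat (state D u) r)) + bhat (state D u) (sigma D j))"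
    and bhat_rec: "bhat (state D t) j = (if sigma D j = 0 then 0 else beta (state D (sent_at tdn D j t)) j)"
    and z_rec: "z (state D t) i = path_weight D w i i * (lam (state D t) i
        + (\<Sum>j\<in>children D i. ahat (state D t) j)) + bhat (state D t) i"
begin

abbreviation W :: "nat \<Rightarrow> nat \<Rightarrow> real" where
  "W \<equiv> path_weight D w"

lemma weight_outside_root_child: "j \<in> V \<Longrightarrow> \<sigma> j = 0 \<Longrightarrow> j \<notin> anc k \<Longrightarrow> W j k = 0"
  using path_weight_away[of j k w] by (simp add: path_weight_0)

lemma bhat_sum_of_beta_sum:
  assumes "j \<in> V"
    and "\<sigma> j \<noteq> 0 \<Longrightarrow> beta (state D (sent_at tdn D j t)) j =
      (\<Sum>k\<in>V. if j \<notin> anc k then W j k * lam (state D (bhat_origin j k t)) k else 0)"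
  shows "bhat (state D t) j = (\<Sum>k\<in>V. if j \<notin> anc k then W j k * lam (state D (bhat_origin j k t)) k else 0)"
proof (cases "\<sigma> j = 0")
  case True
  then show ?thesis using weight_outside_root_child[OF assms(1) True] by (simp add: bhat_rec cong: if_cong)
qed (use assms in \<open>simp add: bhat_rec\<close>)

lemma beta_eq_sum:
  "j \<in> V \<Longrightarrow> beta (state D t) j = (\<Sum>k\<in>V. if j \<notin> anc k then W j k * lam (state D (beta_origin j k t)) k else 0)"
proof (induction t arbitrary: j rule: less_induct)
  case (less t)
  consider "t = 0" | u where "t = Suc u" "\<sigma> j = 0" | u where "t = Suc u" "\<sigma> j \<noteq> 0"
    by (cases t) auto
  then show ?case
  proof cases
    case 1
    then show ?thesis by (simp add: beta_init lam_state_0 cong: if_cong)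
  next
    case 2
    then show ?thesis using weight_outside_root_child[OF less.prems] by (simp add: beta_rec cong: if_cong)
  next
    case (3 u)
    let ?p = "\<sigma> j"
    let ?X = "\<lambda>k. if ?p \<in> anc k \<and> ?p \<noteq> k \<and> child_towards ?p k \<noteq> j
      then lam (state D (ahat_origin (child_towards ?p k) k u)) k else 0"
    let ?Y = "\<lambda>k. if ?p \<notin> anc k then W ?p k * lam (state D (bhat_origin ?p k u)) k else 0"
    have pV: "?p \<in> V" using parent_in_nodes less.prems 3 by simp
    have ahat_sum: "(\<Sum>r\<in>ch ?p - {j}. ahat (state D u) r) = (\<Sum>k\<in>V. ?X k)"
      using ahat_children_eq_sum[OF pV, of u "{j}"] by simp
    have bhat_sum: "bhat (state D u) ?p = (\<Sum>k\<in>V. ?Y k)"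
      by (rule bhat_sum_of_beta_sum[OF pV]) (use less.IH pV 3 sent_at_le le_imp_less_Suc in blast)
    have "beta (state D t) j = W ?p ?p * lam (state D (Suc u)) ?p + W ?p ?p * (\<Sum>k\<in>V. ?X k) + (\<Sum>k\<in>V. ?Y k)"
      using 3 by (simp add: beta_rec ahat_sum bhat_sum distrib_left)
    also have "\<dots> = (\<Sum>k\<in>V. (if k = ?p then W ?p ?p * lam (state D (Suc u)) k else 0) + W ?p ?p * ?X k + ?Y k)"
      using pV by (simp add: sum.distrib sum_distrib_left)
    also have "\<dots> = (\<Sum>k\<in>V. if j \<notin> anc k then W j k * lam (state D (beta_origin j k t)) k else 0)"
      unfolding 3(1)
      by (intro sum.cong refl beta_summand_split[OF less.prems 3(2), where g = "\<lambda>k s. lam (state D s) k", symmetric])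
    finally show ?thesis .
  qed
qed

lemma bhat_eq_sum:
  assumes "j \<in> V"
  shows "bhat (state D t) j = (\<Sum>k\<in>V. if j \<notin> anc k then W j k * lam (state D (bhat_origin j k t)) k else 0)"
  by (rule bhat_sum_of_beta_sum[OF assms beta_eq_sum[OF assms]])

lemma z_eq_sum:
  assumes "i \<in> V"
  shows "z (state D t) i = (\<Sum>k\<in>V. W i k * lam (state D (z_origin i k t)) k)"
proof -
  let ?X = "\<lambda>k. if i \<in> anc k \<and> i \<noteq> k then lam (state D (ahat_origin (child_towards i k) k t)) k else 0"
  let ?Y = "\<lambda>k. if i \<notin> anc k then W i k * lam (state D (bhat_origin i k t)) k else 0"
  have "z (state D t) i = W i i * lam (state D t) i + W i i * (\<Sum>k\<in>V. ?X k) + (\<Sum>k\<in>V. ?Y k)"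
    using ahat_children_eq_sum[OF assms, of t "{}"]
    by (simp add: z_rec bhat_eq_sum[OF assms] distrib_left)
  also have "\<dots> = (\<Sum>k\<in>V. (if k = i then W i i * lam (state D t) k else 0) + W i i * ?X k + ?Y k)"
    using assms by (simp add: sum.distrib sum_distrib_left)
  also have "\<dots> = (\<Sum>k\<in>V. W i k * lam (state D (z_origin i k t)) k)"
    by (intro sum.cong refl z_summand_split[OF assms, where g = "\<lambda>k s. lam (state D s) k", symmetric])
  finally show ?thesis .
qed

end

context radial
begin

sublocale P: message_sums D "rr D" betaP bPhat zP
  by unfold_locales (simp_all add: beta_Suc bhat_eq z_eq Rm_eq_path_weight state_0 st0_def)

sublocale Q: message_sums D "xx D" betaQ bQhat zQ
  by unfold_locales (simp_all add: beta_Suc bhat_eq z_eq Xm_eq_path_weight state_0 st0_def)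

lemma z_sampled:
  assumes "i \<in> V"
  shows "zP (state D t) i = (\<Sum>k\<in>V. Rm D i k * lam (state D (z_origin i k t)) k)"
    and "zQ (state D t) i = (\<Sum>k\<in>V. Xm D i k * lam (state D (z_origin i k t)) k)"
  using P.z_eq_sum[OF assms] Q.z_eq_sum[OF assms] by (simp_all add: Rm_eq_path_weight Xm_eq_path_weight)

lemma z_origin_undelayed:
  assumes "delays_le D 0" "i \<in> V" "k \<in> V"
  shows "z_origin i k t = t - dd D i k"
proof -
  have "dd D i k = tdist D i k - 1" by (simp add: dd_def)
  then show ?thesis using lags_exact z_origin_lags[OF assms, of t] by simp
qed

lemma z_origin_delay_bound:
  assumes "delays_le D \<tau>" "i \<in> V" "k \<in> V"
  shows "z_origin i k t \<le> t" "t - z_origin i k t \<le> (\<tau> + 1) * diam D"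
proof -
  have "z_origin i k t \<le> t \<and> t - z_origin i k t \<le> (\<tau> + 1) * tdist D i k - 1"
    using lags_bound z_origin_lags[OF assms] by blast
  moreover have "(\<tau> + 1) * tdist D i k \<le> (\<tau> + 1) * diam D"
    using mult_le_mono2[OF tdist_le_diam[OF assms(2,3)]] .
  ultimately show "z_origin i k t \<le> t" "t - z_origin i k t \<le> (\<tau> + 1) * diam D" by linarith+
qed

end

theorem lemma2:
  fixes D :: prob
  assumes tree: "is_tree (nodes D) (sigma D)"
    and lines: "\<forall>k\<in>{1..nodes D}. rr D k \<ge> 0 \<and> xx D k \<ge> 0"
    and data: "\<forall>i\<in>{1..nodes D}. vlo D i \<le> vhi D i \<and> plo D i \<le> phi D i \<and> qlo D i \<le> qhi D i
                  \<and> aP D i > 0 \<and> aQ D i > 0"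
    and gam: "gam D > 0"
  shows
   "((\<forall>j\<in>{1..nodes D}. sigma D j \<noteq> 0 \<longrightarrow> (\<forall>t. tup D j t = 0 \<and> tdn D j t = 0)) \<longrightarrow>
      (\<forall>i\<in>{1..nodes D}. \<forall>t.
         zP (state D t) i = (\<Sum>j=1..nodes D. Rm D i j * lam (state D (t - dd D i j)) j) \<and>
         zQ (state D t) i = (\<Sum>j=1..nodes D. Xm D i j * lam (state D (t - dd D i j)) j)))
    \<and> (\<forall>tmax::nat.
       (\<forall>j\<in>{1..nodes D}. sigma D j \<noteq> 0 \<longrightarrow> (\<forall>t. tup D j t \<le> tmax \<and> tdn D j t \<le> tmax)) \<longrightarrow>
       (\<forall>i\<in>{1..nodes D}. \<forall>t. \<exists>tb :: nat \<Rightarrow> nat.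
          (\<forall>j\<in>{1..nodes D}. tb j \<le> (tmax + 1) * diam D) \<and>
          zP (state D t) i = (\<Sum>j=1..nodes D. Rm D i j * lam (state D (t - tb j)) j) \<and>
          zQ (state D t) i = (\<Sum>j=1..nodes D. Xm D i j * lam (state D (t - tb j)) j)))"
proof -
  interpret radial D by unfold_locales (rule tree)
  show ?thesis
  proof (intro conjI impI allI ballI)
    fix i t assume "\<forall>j\<in>V. \<sigma> j \<noteq> 0 \<longrightarrow> (\<forall>t. tup D j t = 0 \<and> tdn D j t = 0)" and i: "i \<in> V"
    then have "z_origin i k t = t - dd D i k" if "k \<in> V" for k
      using z_origin_undelayed that by (simp add: delays_le_def)
    then show "zP (state D t) i = (\<Sum>j\<in>V. Rm D i j * lam (state D (t - dd D i j)) j)"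
      and "zQ (state D t) i = (\<Sum>j\<in>V. Xm D i j * lam (state D (t - dd D i j)) j)"
      by (simp_all add: z_sampled[OF i])
  next
    fix tmax i t assume "\<forall>j\<in>V. \<sigma> j \<noteq> 0 \<longrightarrow> (\<forall>t. tup D j t \<le> tmax \<and> tdn D j t \<le> tmax)" and i: "i \<in> V"
    then have delays: "delays_le D tmax" by (simp add: delays_le_def)
    show "\<exists>tb. (\<forall>j\<in>V. tb j \<le> (tmax + 1) * diam D) \<and>
        zP (state D t) i = (\<Sum>j\<in>V. Rm D i j * lam (state D (t - tb j)) j) \<and>
        zQ (state D t) i = (\<Sum>j\<in>V. Xm D i j * lam (state D (t - tb j)) j)"
      using z_origin_delay_bound[OF delays i] by (intro exI[of _ "\<lambda>k. t - z_origin i k t"]) (simp add: z_sampled[OF i])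
  qed
qed

end
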